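(* For every real $\alpha$ with $0<\alpha<1/2$ there exists a constant $C_\alpha$ such that for every positive integer $N$, \[ \max_{|a_1|^2+\cdots+|a_N|^2=1}\ \sum_{m,n\le N}\frac{a_m\overline{a_n}\,(m,n)^{2\alpha}}{(mn)^{\alpha}} \le C_\alpha N^{1-2\alpha}, \] where the maximum is over complex vectors $(a_1,\dots,a_N)$ of Euclidean norm $1$ and the sum runs over positive integers $m,n\le N$.
   Context: $(m,n)$ denotes the greatest common divisor of the positive integers $m$ and $n$. *)

theory Defs
  imports "HOL-Analysis.Analysis"
begin

end

theory Submission
  imports Defs "HOL-Computational_Algebra.Primes"
begin

text \<open>With \<open>g = (m,n)\<close> the kernel is \<open>((m/g)(n/g))\<^sup>-\<^sup>\<alpha>\<close>, so for \<open>x = |a|\<close> the form is at most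
  \<open>\<Sum>\<^sub>d (T x)\<^sub>d\<^sup>2\<close> with \<open>(T x)\<^sub>d = \<Sum>\<^bsub>d | m \<le> N\<^esub> x\<^sub>m (m/d)\<^sup>-\<^sup>\<alpha>\<close>. By duality it suffices to bound the
  adjoint \<open>T\<^sup>*\<close>. Expanding \<open>\<parallel>T\<^sup>* y\<parallel>\<^sup>2\<close> gives sums of \<open>m\<^sup>-\<^sup>2\<^sup>\<alpha>\<close> over the multiples of
  \<open>lcm(d\<^sub>1,d\<^sub>2)\<close> up to \<open>N\<close>, which are \<open>\<le> N\<^sup>1\<^sup>-\<^sup>2\<^sup>\<alpha>/(1-2\<alpha>) \<sqdot> (d\<^sub>1,d\<^sub>2) (d\<^sub>1d\<^sub>2)\<^sup>\<alpha>\<^sup>-\<^sup>1\<close>. The remaining GCD form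
  with exponent \<open>1/2 + \<epsilon>\<close>, \<open>\<epsilon> = 1/2 - \<alpha>\<close>, is \<open>O(\<parallel>y\<parallel>\<^sup>2)\<close>: bound \<open>(d\<^sub>1,d\<^sub>2) \<le> \<Sum>\<^bsub>e | d\<^sub>1, e | d\<^sub>2\<^esub> e\<^sup>1\<^sup>/\<^sup>2 e\<^sup>1\<^sup>/\<^sup>2\<close>,
  apply Cauchy--Schwarz on the multiples of each \<open>e\<close>, and absorb the number of divisors by
  \<open>\<tau>(d) = O(d\<^sup>\<epsilon>)\<close>.\<close>

lemma card_divisors_prime_power_mult_le:
  fixes p r k :: nat
  assumes p: "prime p" and r: "r > 0"
  shows "card {d. d dvd p^k * r} \<le> Suc k * card {d. d dvd r}"
proof -
  have "{d. d dvd p^k * r} \<subseteq> (\<lambda>(i, e). p^i * e) ` ({..k} \<times> {e. e dvd r})"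
  proof
    fix d assume "d \<in> {d. d dvd p^k * r}"
    then obtain x y where "d = x * y" "x dvd p^k" "y dvd r" by (auto elim: dvd_productE)
    moreover from \<open>x dvd p^k\<close> obtain i where "i \<le> k" "x = p^i"
      using divides_primepow_nat[OF p] by auto
    ultimately show "d \<in> (\<lambda>(i, e). p^i * e) ` ({..k} \<times> {e. e dvd r})" by force
  qed
  moreover have "finite ({..k} \<times> {e. e dvd r})" using r by simp
  ultimately have "card {d. d dvd p^k * r} \<le> card ({..k} \<times> {e. e dvd r})"
    by (meson card_image_le card_mono finite_imageI order_trans)
  also have "\<dots> = Suc k * card {e. e dvd r}" by (simp add: card_cartesian_product)
  finally show ?thesis .
qed

lemma Suc_le_two_powr:
  fixes \<epsilon> :: real
  assumes "\<epsilon> > 0"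
  shows "real (Suc k) \<le> (1 + 1 / (\<epsilon> * ln 2)) * 2 powr (k * \<epsilon>)"
proof -
  define L where "L = \<epsilon> * ln 2"
  have L: "L > 0" using assms by (simp add: L_def)
  have "real (Suc k) \<le> (1 + 1/L) * (1 + k * L)" using L by (simp add: field_simps)
  also have "1 + k * L \<le> exp (k * L)" by (rule exp_ge_add_one_self)
  also have "exp (k * L) = 2 powr (k * \<epsilon>)" by (simp add: powr_def L_def mult_ac)
  finally show ?thesis using L by (simp add: L_def mult_left_mono)
qed

lemma of_nat_power_powr: "real (p ^ k) powr \<epsilon> = (real p powr \<epsilon>) ^ k"
  by (induction k) (simp_all add: powr_mult)

text \<open>Each prime power \<open>p^k \<parallel> m\<close> contributes the factor \<open>k + 1\<close> to the divisor count; it is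
  absorbed by \<open>(p^k)\<^sup>\<epsilon>\<close> alone unless \<open>p\<^sup>\<epsilon> < 2\<close>, which happens only for finitely many \<open>p\<close>.\<close>

lemma Suc_le_prime_power_powr:
  fixes \<epsilon> :: real and p :: nat
  assumes \<epsilon>: "\<epsilon> > 0" and p: "p > 1"
  shows "real (Suc k) \<le> (if real p powr \<epsilon> < 2 then 1 + 1 / (\<epsilon> * ln 2) else 1) * real (p^k) powr \<epsilon>"
proof (cases "real p powr \<epsilon> < 2")
  case True
  have "real (Suc k) \<le> (1 + 1 / (\<epsilon> * ln 2)) * 2 powr (k * \<epsilon>)"
    by (rule Suc_le_two_powr[OF \<epsilon>])
  also have "2 powr (k * \<epsilon>) = (2 powr \<epsilon>) ^ k" by (simp add: powr_power)
  also have "\<dots> \<le> real (p^k) powr \<epsilon>"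
    unfolding of_nat_power_powr using p \<epsilon> by (intro power_mono powr_mono2) auto
  finally show ?thesis using True \<epsilon> by (simp add: mult_left_mono)
next
  case False
  have "real (Suc k) \<le> 2 ^ k" using less_exp[of k] by (simp add: Suc_le_eq flip: of_nat_Suc)
  also have "\<dots> \<le> real (p^k) powr \<epsilon>"
    unfolding of_nat_power_powr using False by (intro power_mono) auto
  finally show ?thesis using False by simp
qed

lemma prime_dvd_prime_power_mult_iff:
  fixes p q r :: nat
  assumes "prime p" "prime q" "k > 0"
  shows "q dvd p^k * r \<longleftrightarrow> q = p \<or> q dvd r"
  using assms by (auto simp: prime_dvd_mult_iff prime_dvd_power_iff primes_dvd_imp_eq)

lemma card_divisors_le_powr_small_primes:
  fixes \<epsilon> :: real
  assumes \<epsilon>: "\<epsilon> > 0" and "m > 0"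
  shows "real (card {d. d dvd m}) \<le>
      (1 + 1 / (\<epsilon> * ln 2)) ^ card {q. prime q \<and> q dvd m \<and> real q powr \<epsilon> < 2} * real m powr \<epsilon>"
  using \<open>m > 0\<close>
proof (induction m rule: less_induct)
  case (less m)
  define A where "A = 1 + 1 / (\<epsilon> * ln 2)"
  define S where "S x = {q. prime q \<and> q dvd x \<and> real q powr \<epsilon> < 2}" for x
  have A1: "A \<ge> 1" using \<epsilon> by (simp add: A_def)
  show ?case
  proof (cases "m = 1")
    case True
    then have "S m = {}" by (auto simp: S_def)
    then show ?thesis unfolding S_def[symmetric] using True by simp
  next
    case False
    then obtain p where p: "prime p" "p dvd m" using prime_factor_nat by blast
    define k where "k = multiplicity p m"
    obtain r where r: "m = p^k * r" "\<not> p dvd r"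
      using multiplicity_decompose'[of m p] less.prems p(1) unfolding k_def
      by (metis not_gr0 not_prime_unit)
    have r0: "r > 0" using r(1) less.prems by (metis gr0I mult_0_right)
    have k1: "k > 0" using p less.prems by (simp add: k_def prime_multiplicity_gt_zero_iff)
    have p1: "p > 1" using p prime_gt_1_nat by blast
    have "p^k > 1" using p1 k1 by (intro one_less_power) auto
    hence "r < m" using r(1) r0 by (metis mult_less_cancel2 mult_1)
    note IH = less.IH[OF this r0, folded A_def S_def]
    have "finite (S r)"
      by (rule finite_subset[of _ "{d. d dvd r}"]) (use r0 in \<open>auto simp: S_def\<close>)
    moreover have "S m = (if real p powr \<epsilon> < 2 then insert p (S r) else S r)"
      using prime_dvd_prime_power_mult_iff[OF p(1) _ k1] p unfolding S_def r(1) by auto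
    moreover have "p \<notin> S r" using r(2) by (simp add: S_def)
    ultimately have AS: "(if real p powr \<epsilon> < 2 then A else 1) * A ^ card (S r) = A ^ card (S m)"
      by simp
    have "real (card {d. d dvd m}) \<le> real (Suc k) * real (card {d. d dvd r})"
      using card_divisors_prime_power_mult_le[OF p(1) r0, of k] r(1) by (metis of_nat_le_iff of_nat_mult)
    also have "\<dots> \<le> ((if real p powr \<epsilon> < 2 then A else 1) * real (p^k) powr \<epsilon>) * (A ^ card (S r) * real r powr \<epsilon>)"
      using Suc_le_prime_power_powr[OF \<epsilon> p1, of k] IH A1 unfolding A_def by (intro mult_mono) auto
    also have "\<dots> = A ^ card (S m) * real m powr \<epsilon>"
      using AS r(1) by (simp add: powr_mult flip: AS)
    finally show ?thesis unfolding A_def S_def .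
  qed
qed

lemma divisor_count_le_powr:
  fixes \<epsilon> :: real
  assumes \<epsilon>: "\<epsilon> > 0"
  obtains C where "C > 0" "\<And>m. m > 0 \<Longrightarrow> real (card {d. d dvd m}) \<le> C * real m powr \<epsilon>"
proof -
  define A where "A = 1 + 1 / (\<epsilon> * ln 2)"
  have A1: "A \<ge> 1" using \<epsilon> by (simp add: A_def)
  define P where "P = nat \<lceil>2 powr (1/\<epsilon>)\<rceil>"
  have small_primes: "{q. prime q \<and> q dvd m \<and> real q powr \<epsilon> < 2} \<subseteq> {..P}" for m
  proof
    fix q assume "q \<in> {q. prime q \<and> q dvd m \<and> real q powr \<epsilon> < 2}"
    hence q: "real q powr \<epsilon> < 2" by auto
    have "real q = (real q powr \<epsilon>) powr (1/\<epsilon>)" using \<epsilon> by (simp add: powr_powr)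
    also have "\<dots> \<le> 2 powr (1/\<epsilon>)" using q \<epsilon> by (intro powr_mono2) auto
    finally show "q \<in> {..P}" unfolding P_def by (simp add: le_nat_iff) linarith
  qed
  show ?thesis
  proof (rule that)
    show "A^(P+1) > 0" using A1 by simp
    fix m :: nat assume m: "m > 0"
    have "card {q. prime q \<and> q dvd m \<and> real q powr \<epsilon> < 2} \<le> P + 1"
      using card_mono[OF _ small_primes[of m]] by simp
    hence "A ^ card {q. prime q \<and> q dvd m \<and> real q powr \<epsilon> < 2} \<le> A^(P+1)"
      using A1 by (intro power_increasing) auto
    then show "real (card {d. d dvd m}) \<le> A^(P+1) * real m powr \<epsilon>"
      using card_divisors_le_powr_small_primes[OF \<epsilon> m, folded A_def]
      by (meson order_trans mult_right_mono powr_ge_zero)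
  qed
qed

lemma powr_neg_le_diff_powr:
  fixes s x :: real
  assumes s: "s > 0" "s \<noteq> 1" and x: "x \<ge> 1"
  shows "(x + 1) powr (-s) \<le> ((x + 1) powr (1 - s) - x powr (1 - s)) / (1 - s)"
proof -
  obtain z where z: "x < z" "z < x + 1" "(x + 1) powr (1 - s) - x powr (1 - s) = (1 - s) * z powr (-s)"
  proof -
    have "\<exists>z. x < z \<and> z < x + 1 \<and>
        (x + 1) powr (1 - s) - x powr (1 - s) = ((x + 1) - x) * ((1 - s) * z powr (1 - s - 1))"
    proof (rule MVT2)
      fix y assume "x \<le> y" "y \<le> x + 1"
      then show "((\<lambda>y. y powr (1 - s)) has_real_derivative ((1 - s) * y powr (1 - s - 1))) (at y)"
        using has_real_derivative_powr[of y "1 - s"] x by simp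
    qed simp
    then show ?thesis using that by auto
  qed
  have "((x + 1) powr (1 - s) - x powr (1 - s)) / (1 - s) = z powr (-s)" using z(3) s by simp
  moreover have "(x + 1) powr (-s) \<le> z powr (-s)" using z x s by (intro powr_mono2') auto
  ultimately show ?thesis by simp
qed

lemma sum_powr_neg_le:
  fixes s :: real
  assumes s: "s > 0" "s \<noteq> 1" and M: "M \<ge> 1"
  shows "(\<Sum>k=1..M. real k powr (-s)) \<le> 1 + (real M powr (1 - s) - 1) / (1 - s)"
  using M
proof (induction M rule: dec_induct)
  case (step M)
  have "real (Suc M) powr (-s) \<le> (real (Suc M) powr (1 - s) - real M powr (1 - s)) / (1 - s)"
    using powr_neg_le_diff_powr[OF s, of "real M"] step.hyps by (simp add: add.commute)
  with step.IH show ?case by (simp add: diff_divide_distrib)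
qed simp

lemma sum_powr_neg_le_of_less_1:
  fixes s :: real
  assumes s: "0 < s" "s < 1"
  shows "(\<Sum>k=1..M. real k powr (-s)) \<le> real M powr (1 - s) / (1 - s)"
proof (cases "M = 0")
  case False
  then have "(\<Sum>k=1..M. real k powr (-s)) \<le> 1 + (real M powr (1 - s) - 1) / (1 - s)"
    using s by (intro sum_powr_neg_le) auto
  also have "\<dots> \<le> real M powr (1 - s) / (1 - s)" using s by (simp add: diff_divide_distrib)
  finally show ?thesis .
qed simp

lemma sum_powr_neg_le_of_gt_1:
  fixes s :: real
  assumes s: "s > 1"
  shows "(\<Sum>k=1..M. real k powr (-s)) \<le> s / (s - 1)"
proof (cases "M = 0")
  case False
  have "1 - s \<noteq> 0" "s - 1 \<noteq> 0" using s by auto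
  then have "1 + (real M powr (1 - s) - 1) / (1 - s) = s / (s - 1) - real M powr (1 - s) / (s - 1)"
    by (simp add: divide_simps) argo
  also have "\<dots> \<le> s / (s - 1)" using s by simp
  finally show ?thesis using sum_powr_neg_le[of s M] False s by simp
qed (use s in simp)

lemma sum_multiples_reindex:
  fixes h :: "nat \<Rightarrow> 'a::comm_monoid_add"
  assumes L: "L > 0"
  shows "(\<Sum>m=1..N. if L dvd m then h m else 0) = (\<Sum>j=1..N div L. h (L * j))"
proof -
  have "(\<Sum>m=1..N. if L dvd m then h m else 0) = sum h {m\<in>{1..N}. L dvd m}"
    by (rule sum.inter_filter[symmetric]) simp
  also have "{m\<in>{1..N}. L dvd m} = (\<lambda>j. L * j) ` {1..N div L}"
    using L by (auto simp: less_eq_div_iff_mult_less_eq mult.commute[of L])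
  also have "sum h ((\<lambda>j. L * j) ` {1..N div L}) = (\<Sum>j=1..N div L. h (L * j))"
    using L by (subst sum.reindex) (auto simp: inj_on_def)
  finally show ?thesis .
qed

definition multiple_sum :: "real \<Rightarrow> nat \<Rightarrow> (nat \<Rightarrow> real) \<Rightarrow> nat \<Rightarrow> real" where
  "multiple_sum \<alpha> N x d = (\<Sum>m=1..N. if d dvd m then x m * (real m / real d) powr (-\<alpha>) else 0)"

definition divisor_sum :: "real \<Rightarrow> nat \<Rightarrow> (nat \<Rightarrow> real) \<Rightarrow> nat \<Rightarrow> real" where
  "divisor_sum \<alpha> N y m = (\<Sum>d=1..N. if d dvd m then y d * (real m / real d) powr (-\<alpha>) else 0)"

lemma sum_mult_multiple_sum_eq_sum_mult_divisor_sum: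
  "(\<Sum>d=1..N. y d * multiple_sum \<alpha> N x d) = (\<Sum>m=1..N. x m * divisor_sum \<alpha> N y m)"
proof -
  have "(\<Sum>d=1..N. y d * multiple_sum \<alpha> N x d)
      = (\<Sum>d=1..N. \<Sum>m=1..N. if d dvd m then x m * y d * (real m / real d) powr (-\<alpha>) else 0)"
    by (simp add: multiple_sum_def sum_distrib_left if_distrib mult_ac cong: if_cong)
  also have "\<dots> = (\<Sum>m=1..N. \<Sum>d=1..N. if d dvd m then x m * y d * (real m / real d) powr (-\<alpha>) else 0)"
    by (rule sum.swap)
  also have "\<dots> = (\<Sum>m=1..N. x m * divisor_sum \<alpha> N y m)"
    by (simp add: divisor_sum_def sum_distrib_left if_distrib mult_ac cong: if_cong)
  finally show ?thesis .
qed

lemma sum_squares_of_restricted_sums: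
  fixes u :: "'a \<Rightarrow> real" and w :: "'b \<Rightarrow> 'a \<Rightarrow> real"
  shows "(\<Sum>d\<in>J. (\<Sum>m\<in>I. if P d m then u m * w d m else 0)\<^sup>2)
       = (\<Sum>m\<in>I. \<Sum>n\<in>I. u m * u n * (\<Sum>d\<in>J. if P d m \<and> P d n then w d m * w d n else 0))"
proof -
  have "(\<Sum>d\<in>J. (\<Sum>m\<in>I. if P d m then u m * w d m else 0)\<^sup>2)
      = (\<Sum>d\<in>J. \<Sum>m\<in>I. \<Sum>n\<in>I. if P d m \<and> P d n then u m * u n * (w d m * w d n) else 0)"
    unfolding power2_eq_square sum_product by (intro sum.cong refl) (auto simp: mult_ac)
  also have "\<dots> = (\<Sum>m\<in>I. \<Sum>n\<in>I. \<Sum>d\<in>J. if P d m \<and> P d n then u m * u n * (w d m * w d n) else 0)"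
    by (subst sum.swap) (intro sum.cong refl sum.swap)
  also have "\<dots> = (\<Sum>m\<in>I. \<Sum>n\<in>I. u m * u n * (\<Sum>d\<in>J. if P d m \<and> P d n then w d m * w d n else 0))"
    by (simp add: sum_distrib_left if_distrib cong: if_cong)
  finally show ?thesis .
qed

lemma gcd_in_atLeastAtMost:
  fixes m n :: nat
  assumes "m \<in> {1..N}" "n \<in> {1..N}"
  shows "gcd m n \<in> {1..N}"
  using assms by (auto simp: Suc_le_eq intro: order_trans[OF gcd_le1_nat])

lemma gcd_powr_div_eq:
  fixes m n :: nat
  assumes "m > 0" "n > 0"
  shows "real (gcd m n) powr (2 * \<alpha>) / real (m * n) powr \<alpha>
       = (real m / real (gcd m n)) powr (-\<alpha>) * (real n / real (gcd m n)) powr (-\<alpha>)"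
  using assms by (simp add: powr_divide powr_minus powr_mult divide_simps powr_add[symmetric])

text \<open>Only the term \<open>d = gcd m n\<close> of the right-hand side reproduces the kernel; the others
  are nonnegative.\<close>

lemma quadratic_form_le_sum_multiple_sum_squares:
  fixes x :: "nat \<Rightarrow> real"
  assumes x: "\<And>m. x m \<ge> 0"
  shows "(\<Sum>m=1..N. \<Sum>n=1..N. x m * x n * (real (gcd m n) powr (2 * \<alpha>) / real (m * n) powr \<alpha>))
       \<le> (\<Sum>d=1..N. (multiple_sum \<alpha> N x d)\<^sup>2)"
proof -
  have "(\<Sum>m=1..N. \<Sum>n=1..N. x m * x n * (real (gcd m n) powr (2 * \<alpha>) / real (m * n) powr \<alpha>))
      \<le> (\<Sum>m=1..N. \<Sum>n=1..N. x m * x n *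
          (\<Sum>d=1..N. if d dvd m \<and> d dvd n then (real m / real d) powr (-\<alpha>) * (real n / real d) powr (-\<alpha>) else 0))"
  proof (intro sum_mono mult_left_mono)
    fix m n assume mn: "m \<in> {1..N}" "n \<in> {1..N}"
    then have "real (gcd m n) powr (2 * \<alpha>) / real (m * n) powr \<alpha>
        = (if gcd m n dvd m \<and> gcd m n dvd n
           then (real m / real (gcd m n)) powr (-\<alpha>) * (real n / real (gcd m n)) powr (-\<alpha>) else 0)"
      using gcd_powr_div_eq[of m n \<alpha>] by simp
    also have "\<dots> \<le> (\<Sum>d=1..N. if d dvd m \<and> d dvd n then (real m / real d) powr (-\<alpha>) * (real n / real d) powr (-\<alpha>) else 0)"
      by (rule member_le_sum[OF gcd_in_atLeastAtMost[OF mn]]) auto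
    finally show "real (gcd m n) powr (2 * \<alpha>) / real (m * n) powr \<alpha> \<le> \<dots>" .
  qed (use x in auto)
  also have "\<dots> = (\<Sum>d=1..N. (multiple_sum \<alpha> N x d)\<^sup>2)"
    unfolding multiple_sum_def by (rule sum_squares_of_restricted_sums[symmetric])
  finally show ?thesis .
qed

lemma sum_common_multiples_powr_le:
  fixes \<alpha> :: real and d1 d2 :: nat
  assumes \<alpha>: "0 < \<alpha>" "\<alpha> < 1/2" and d: "d1 > 0" "d2 > 0"
  shows "(\<Sum>m=1..N. if d1 dvd m \<and> d2 dvd m then (real m / real d1) powr (-\<alpha>) * (real m / real d2) powr (-\<alpha>) else 0)
    \<le> real N powr (1 - 2*\<alpha>) / (1 - 2*\<alpha>) * (real (gcd d1 d2) * (real d1 * real d2) powr (\<alpha> - 1))"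
proof -
  define L where "L = lcm d1 d2"
  define c where "c = (real d1 * real d2) powr \<alpha>"
  have L0: "L > 0" using d by (simp add: L_def lcm_pos_nat)
  have c0: "c \<ge> 0" by (simp add: c_def)
  have "(\<Sum>m=1..N. if d1 dvd m \<and> d2 dvd m then (real m / real d1) powr (-\<alpha>) * (real m / real d2) powr (-\<alpha>) else 0)
      = (\<Sum>m=1..N. if L dvd m then c * real m powr (-(2*\<alpha>)) else 0)"
    using d by (intro sum.cong refl)
      (auto simp: L_def c_def powr_divide powr_minus powr_mult divide_simps powr_add[symmetric])
  also have "\<dots> = c * real L powr (-(2*\<alpha>)) * (\<Sum>j=1..N div L. real j powr (-(2*\<alpha>)))"
    unfolding sum_multiples_reindex[OF L0] by (simp add: sum_distrib_left powr_mult mult_ac)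
  also have "\<dots> \<le> c * real L powr (-(2*\<alpha>)) * ((real N / real L) powr (1 - 2*\<alpha>) / (1 - 2*\<alpha>))"
  proof (intro mult_left_mono order_trans[OF sum_powr_neg_le_of_less_1])
    show "real (N div L) powr (1 - 2*\<alpha>) / (1 - 2*\<alpha>) \<le> (real N / real L) powr (1 - 2*\<alpha>) / (1 - 2*\<alpha>)"
      using \<alpha> by (intro divide_right_mono powr_mono2 of_nat_div_le_of_nat) auto
  qed (use \<alpha> c0 in auto)
  also have "\<dots> = real N powr (1 - 2*\<alpha>) / (1 - 2*\<alpha>) * (c / real L)"
    using L0 by (simp add: powr_divide powr_minus divide_simps powr_add[symmetric])
  also have "c / real L = real (gcd d1 d2) * (real d1 * real d2) powr (\<alpha> - 1)"
  proof -
    have "real d1 * real d2 = real (gcd d1 d2) * real L"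
      unfolding L_def by (metis of_nat_mult prod_gcd_lcm_nat)
    then show ?thesis using d L0 by (simp add: c_def powr_diff field_simps)
  qed
  finally show ?thesis .
qed

lemma sum_multiples_square_le:
  fixes \<epsilon> :: real and e :: nat and y :: "nat \<Rightarrow> real"
  assumes \<epsilon>: "\<epsilon> > 0" and e: "e > 0"
  shows "(\<Sum>d=1..N. if e dvd d then y d * (real e powr (1/2) * real d powr (-(1/2 + \<epsilon>))) else 0)\<^sup>2
       \<le> (1 + \<epsilon>) / \<epsilon> * (\<Sum>d=1..N. if e dvd d then (y d)\<^sup>2 * real d powr (-\<epsilon>) else 0)"
proof -
  define a where "a d = (if e dvd d then y d * real d powr (-\<epsilon> / 2) else 0)" for d
  define b where "b d = (if e dvd d then real e powr (1/2) * real d powr (-(1 + \<epsilon>) / 2) else 0)" for d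
  have "-\<epsilon> / 2 + -(1 + \<epsilon>) / 2 = -(1/2 + \<epsilon>)" by (simp add: field_simps)
  then have "real d powr (-\<epsilon> / 2) * real d powr (-(1 + \<epsilon>) / 2) = real d powr (-(1/2 + \<epsilon>))" for d
    by (simp only: flip: powr_add)
  then have ab: "(\<Sum>d=1..N. if e dvd d then y d * (real e powr (1/2) * real d powr (-(1/2 + \<epsilon>))) else 0)
      = (\<Sum>d=1..N. a d * b d)"
    by (intro sum.cong refl) (simp add: a_def b_def mult_ac)
  have a2: "(\<Sum>d=1..N. (a d)\<^sup>2) = (\<Sum>d=1..N. if e dvd d then (y d)\<^sup>2 * real d powr (-\<epsilon>) else 0)"
    unfolding a_def by (intro sum.cong refl) (simp add: power_mult_distrib power2_eq_square flip: powr_add)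
  have "(real e powr (1/2) * real d powr (-(1 + \<epsilon>) / 2))\<^sup>2 = real e * real d powr (-(1 + \<epsilon>))" for d
    unfolding power_mult_distrib by (simp add: power2_eq_square flip: powr_add)
  then have "(\<Sum>d=1..N. (b d)\<^sup>2) = (\<Sum>d=1..N. if e dvd d then real e * real d powr (-(1 + \<epsilon>)) else 0)"
    unfolding b_def by (intro sum.cong refl) simp
  also have "\<dots> = (\<Sum>j=1..N div e. real e * real (e * j) powr (-(1 + \<epsilon>)))"
    by (rule sum_multiples_reindex[OF e])
  also have "\<dots> \<le> (\<Sum>j=1..N div e. real j powr (-(1 + \<epsilon>)))"
  proof (rule sum_mono)
    fix j
    have "real e * real (e * j) powr (-(1 + \<epsilon>)) = real e powr (-\<epsilon>) * real j powr (-(1 + \<epsilon>))"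
      using e by (simp add: powr_mult powr_minus field_simps flip: powr_add)
    also have "\<dots> \<le> real j powr (-(1 + \<epsilon>))"
      using e \<epsilon> by (intro mult_left_le_one_le) (auto simp: powr_minus field_simps ge_one_powr_ge_zero)
    finally show "real e * real (e * j) powr (-(1 + \<epsilon>)) \<le> real j powr (-(1 + \<epsilon>))" .
  qed
  also have "\<dots> \<le> (1 + \<epsilon>) / \<epsilon>"
    using sum_powr_neg_le_of_gt_1[of "1 + \<epsilon>"] \<epsilon> by simp
  finally have b2: "(\<Sum>d=1..N. (b d)\<^sup>2) \<le> (1 + \<epsilon>) / \<epsilon>" .
  have "(\<Sum>d=1..N. a d * b d)\<^sup>2 \<le> (\<Sum>d=1..N. (a d)\<^sup>2) * (\<Sum>d=1..N. (b d)\<^sup>2)"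
    by (rule Cauchy_Schwarz_ineq_sum)
  also have "\<dots> \<le> (\<Sum>d=1..N. (a d)\<^sup>2) * ((1 + \<epsilon>) / \<epsilon>)"
    using b2 by (intro mult_left_mono sum_nonneg) auto
  finally show ?thesis unfolding ab a2 by (simp add: mult.commute)
qed

lemma sum_divisors_weighted_le:
  fixes \<epsilon> Ct :: real and y :: "nat \<Rightarrow> real"
  assumes Ct: "\<And>d. d > 0 \<Longrightarrow> real (card {e. e dvd d}) \<le> Ct * real d powr \<epsilon>"
  shows "(\<Sum>e=1..N. \<Sum>d=1..N. if e dvd d then (y d)\<^sup>2 * real d powr (-\<epsilon>) else 0) \<le> Ct * (\<Sum>d=1..N. (y d)\<^sup>2)"
proof -
  have "(\<Sum>e=1..N. \<Sum>d=1..N. if e dvd d then (y d)\<^sup>2 * real d powr (-\<epsilon>) else 0)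
      = (\<Sum>d=1..N. \<Sum>e=1..N. if e dvd d then (y d)\<^sup>2 * real d powr (-\<epsilon>) else 0)"
    by (rule sum.swap)
  also have "\<dots> = (\<Sum>d=1..N. (y d)\<^sup>2 * (real d powr (-\<epsilon>) * real (card {e\<in>{1..N}. e dvd d})))"
    by (simp add: sum.inter_filter[symmetric] mult_ac)
  also have "\<dots> \<le> (\<Sum>d=1..N. (y d)\<^sup>2 * Ct)"
  proof (intro sum_mono mult_left_mono)
    fix d assume "d \<in> {1..N}"
    then have d0: "d > 0" by simp
    have "card {e\<in>{1..N}. e dvd d} \<le> card {e. e dvd d}"
      using d0 by (intro card_mono) auto
    then have "real d powr (-\<epsilon>) * real (card {e\<in>{1..N}. e dvd d}) \<le> real d powr (-\<epsilon>) * (Ct * real d powr \<epsilon>)"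
      using Ct[OF d0] by (intro mult_left_mono) auto
    also have "\<dots> = Ct" using d0 by (simp add: powr_minus)
    finally show "real d powr (-\<epsilon>) * real (card {e\<in>{1..N}. e dvd d}) \<le> Ct" .
  qed simp
  also have "\<dots> = Ct * (\<Sum>d=1..N. (y d)\<^sup>2)" by (simp add: sum_distrib_left mult.commute)
  finally show ?thesis .
qed

lemma gcd_quadratic_form_le:
  fixes \<epsilon> Ct :: real and y :: "nat \<Rightarrow> real"
  assumes \<epsilon>: "\<epsilon> > 0" and Ct: "\<And>d. d > 0 \<Longrightarrow> real (card {e. e dvd d}) \<le> Ct * real d powr \<epsilon>"
    and y: "\<And>d. y d \<ge> 0"
  shows "(\<Sum>d1=1..N. \<Sum>d2=1..N. y d1 * y d2 * (real (gcd d1 d2) * (real d1 * real d2) powr (-(1/2 + \<epsilon>))))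
       \<le> (1 + \<epsilon>) / \<epsilon> * Ct * (\<Sum>d=1..N. (y d)\<^sup>2)"
proof -
  define w where "w e d = real e powr (1/2) * real d powr (-(1/2 + \<epsilon>))" for e d :: nat
  have "(\<Sum>d1=1..N. \<Sum>d2=1..N. y d1 * y d2 * (real (gcd d1 d2) * (real d1 * real d2) powr (-(1/2 + \<epsilon>))))
      \<le> (\<Sum>d1=1..N. \<Sum>d2=1..N. y d1 * y d2 * (\<Sum>e=1..N. if e dvd d1 \<and> e dvd d2 then w e d1 * w e d2 else 0))"
  proof (intro sum_mono mult_left_mono)
    fix d1 d2 assume dd: "d1 \<in> {1..N}" "d2 \<in> {1..N}"
    have "w (gcd d1 d2) d1 * w (gcd d1 d2) d2 = real (gcd d1 d2) * (real d1 * real d2) powr (-(1/2 + \<epsilon>))"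
      by (simp add: w_def powr_mult mult_ac flip: powr_add)
    then show "real (gcd d1 d2) * (real d1 * real d2) powr (-(1/2 + \<epsilon>))
        \<le> (\<Sum>e=1..N. if e dvd d1 \<and> e dvd d2 then w e d1 * w e d2 else 0)"
      using member_le_sum[OF gcd_in_atLeastAtMost[OF dd], of "\<lambda>e. if e dvd d1 \<and> e dvd d2 then w e d1 * w e d2 else 0"]
      by (simp add: w_def)
  qed (use y in auto)
  also have "\<dots> = (\<Sum>e=1..N. (\<Sum>d=1..N. if e dvd d then y d * w e d else 0)\<^sup>2)"
    by (rule sum_squares_of_restricted_sums[symmetric])
  also have "\<dots> \<le> (\<Sum>e=1..N. (1 + \<epsilon>) / \<epsilon> * (\<Sum>d=1..N. if e dvd d then (y d)\<^sup>2 * real d powr (-\<epsilon>) else 0))"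
    unfolding w_def by (intro sum_mono sum_multiples_square_le \<epsilon>) simp
  also have "\<dots> \<le> (1 + \<epsilon>) / \<epsilon> * (Ct * (\<Sum>d=1..N. (y d)\<^sup>2))"
    unfolding sum_distrib_left[symmetric] using \<epsilon> sum_divisors_weighted_le[OF Ct]
    by (intro mult_left_mono) auto
  finally show ?thesis by (simp add: mult.assoc)
qed

lemma divisor_sum_square_le:
  fixes \<alpha> Ct :: real and y :: "nat \<Rightarrow> real"
  assumes \<alpha>: "0 < \<alpha>" "\<alpha> < 1/2"
    and Ct: "\<And>d. d > 0 \<Longrightarrow> real (card {e. e dvd d}) \<le> Ct * real d powr (1/2 - \<alpha>)"
    and y: "\<And>d. y d \<ge> 0"
  shows "(\<Sum>m=1..N. (divisor_sum \<alpha> N y m)\<^sup>2)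
       \<le> real N powr (1 - 2*\<alpha>) / (1 - 2*\<alpha>) * ((3 - 2*\<alpha>) / (1 - 2*\<alpha>) * Ct) * (\<Sum>d=1..N. (y d)\<^sup>2)"
proof -
  define cN where "cN = real N powr (1 - 2*\<alpha>) / (1 - 2*\<alpha>)"
  have cN: "cN \<ge> 0" using \<alpha> by (simp add: cN_def)
  have "(\<Sum>m=1..N. (divisor_sum \<alpha> N y m)\<^sup>2)
      = (\<Sum>d1=1..N. \<Sum>d2=1..N. y d1 * y d2 * (\<Sum>m=1..N.
          if d1 dvd m \<and> d2 dvd m then (real m / real d1) powr (-\<alpha>) * (real m / real d2) powr (-\<alpha>) else 0))"
    unfolding divisor_sum_def by (rule sum_squares_of_restricted_sums)
  also have "\<dots> \<le> (\<Sum>d1=1..N. \<Sum>d2=1..N. y d1 * y d2 * (cN * (real (gcd d1 d2) * (real d1 * real d2) powr (\<alpha> - 1))))"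
    unfolding cN_def using \<alpha> y by (intro sum_mono mult_left_mono sum_common_multiples_powr_le) auto
  also have "\<dots> = cN * (\<Sum>d1=1..N. \<Sum>d2=1..N. y d1 * y d2 * (real (gcd d1 d2) * (real d1 * real d2) powr (-(1/2 + (1/2 - \<alpha>)))))"
    by (simp add: sum_distrib_left mult_ac)
  also have "\<dots> \<le> cN * ((1 + (1/2 - \<alpha>)) / (1/2 - \<alpha>) * Ct * (\<Sum>d=1..N. (y d)\<^sup>2))"
    using \<alpha> by (intro mult_left_mono[OF gcd_quadratic_form_le cN] Ct y) auto
  also have "(1 + (1/2 - \<alpha>)) / (1/2 - \<alpha>) = (3 - 2*\<alpha>) / (1 - 2*\<alpha>)"
    using \<alpha> by (simp add: field_simps)
  finally show ?thesis by (simp add: cN_def mult.assoc)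
qed

text \<open>A duality argument: with \<open>y\<close> the multiple sums of \<open>x\<close>, \<open>\<Sum> y\<^sup>2 = \<langle>x, T\<^sup>* y\<rangle>\<close>, and Cauchy--Schwarz
  together with the bound for the adjoint \<open>T\<^sup>*\<close> gives \<open>(\<Sum> y\<^sup>2)\<^sup>2 \<le> \<Sum> x\<^sup>2 \<sqdot> D \<sqdot> \<Sum> y\<^sup>2\<close>.\<close>

lemma multiple_sum_square_le:
  fixes D :: real and x :: "nat \<Rightarrow> real"
  assumes D: "D \<ge> 0"
    and dual: "\<And>y. (\<And>d. y d \<ge> 0) \<Longrightarrow> (\<Sum>m=1..N. (divisor_sum \<alpha> N y m)\<^sup>2) \<le> D * (\<Sum>d=1..N. (y d)\<^sup>2)"
    and x: "\<And>m. x m \<ge> 0"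
  shows "(\<Sum>d=1..N. (multiple_sum \<alpha> N x d)\<^sup>2) \<le> D * (\<Sum>m=1..N. (x m)\<^sup>2)"
proof -
  define y where "y = multiple_sum \<alpha> N x"
  define Y where "Y = (\<Sum>d=1..N. (y d)\<^sup>2)"
  define X where "X = (\<Sum>m=1..N. (x m)\<^sup>2)"
  have y0: "y d \<ge> 0" for d unfolding y_def multiple_sum_def using x by (intro sum_nonneg) auto
  have Y0: "Y \<ge> 0" and X0: "X \<ge> 0" by (simp_all add: Y_def X_def sum_nonneg)
  have "Y = (\<Sum>m=1..N. x m * divisor_sum \<alpha> N y m)"
    unfolding Y_def power2_eq_square using sum_mult_multiple_sum_eq_sum_mult_divisor_sum
    by (simp add: y_def)
  then have "Y\<^sup>2 \<le> X * (\<Sum>m=1..N. (divisor_sum \<alpha> N y m)\<^sup>2)"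
    unfolding X_def by (simp add: Cauchy_Schwarz_ineq_sum)
  also have "\<dots> \<le> X * (D * Y)"
    using dual[OF y0] X0 by (simp add: Y_def mult_left_mono)
  finally have "Y * Y \<le> (D * X) * Y" by (simp add: power2_eq_square mult_ac)
  then have "Y \<le> D * X"
    using Y0 D X0 by (cases "Y = 0") (auto simp: mult_le_cancel_right)
  then show ?thesis by (simp add: Y_def X_def y_def)
qed

lemma Re_quadratic_form_le_norms:
  fixes a :: "'a \<Rightarrow> complex" and K :: "'a \<Rightarrow> 'a \<Rightarrow> real"
  assumes K: "\<And>m n. K m n \<ge> 0"
  shows "Re (\<Sum>m\<in>A. \<Sum>n\<in>A. a m * cnj (a n) * complex_of_real (K m n))
       \<le> (\<Sum>m\<in>A. \<Sum>n\<in>A. cmod (a m) * cmod (a n) * K m n)"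
proof -
  have "Re (\<Sum>m\<in>A. \<Sum>n\<in>A. a m * cnj (a n) * complex_of_real (K m n))
      \<le> cmod (\<Sum>m\<in>A. \<Sum>n\<in>A. a m * cnj (a n) * complex_of_real (K m n))"
    by (rule complex_Re_le_cmod)
  also have "\<dots> \<le> (\<Sum>m\<in>A. \<Sum>n\<in>A. cmod (a m * cnj (a n) * complex_of_real (K m n)))"
    by (intro order_trans[OF norm_sum] sum_mono norm_sum)
  also have "\<dots> = (\<Sum>m\<in>A. \<Sum>n\<in>A. cmod (a m) * cmod (a n) * K m n)"
    using K by (simp add: norm_mult)
  finally show ?thesis .
qed

theorem theorem2:
  fixes \<alpha> :: real
  assumes "0 < \<alpha>" and "\<alpha> < 1/2"
  shows "\<exists>C::real. \<forall>N::nat. N \<ge> 1 \<longrightarrow>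
           (\<forall>a :: nat \<Rightarrow> complex. (\<Sum>n=1..N. (cmod (a n))\<^sup>2) = 1 \<longrightarrow>
              Re (\<Sum>m=1..N. \<Sum>n=1..N.
                    a m * cnj (a n) * complex_of_real (real (gcd m n) powr (2*\<alpha>) / real (m*n) powr \<alpha>))
              \<le> C * real N powr (1 - 2*\<alpha>))"
proof -
  obtain Ct where Ct: "Ct > 0" "\<And>d. d > 0 \<Longrightarrow> real (card {e. e dvd d}) \<le> Ct * real d powr (1/2 - \<alpha>)"
    using divisor_count_le_powr[of "1/2 - \<alpha>"] assms by auto
  define C where "C = (3 - 2*\<alpha>) / (1 - 2*\<alpha>) * Ct / (1 - 2*\<alpha>)"
  have C_eq: "real N powr (1 - 2*\<alpha>) / (1 - 2*\<alpha>) * ((3 - 2*\<alpha>) / (1 - 2*\<alpha>) * Ct) = C * real N powr (1 - 2*\<alpha>)"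
    for N by (simp add: C_def)
  show ?thesis
  proof (intro exI[of _ C] allI impI)
    fix N :: nat and a :: "nat \<Rightarrow> complex"
    assume a: "(\<Sum>n=1..N. (cmod (a n))\<^sup>2) = 1"
    have "Re (\<Sum>m=1..N. \<Sum>n=1..N.
            a m * cnj (a n) * complex_of_real (real (gcd m n) powr (2*\<alpha>) / real (m*n) powr \<alpha>))
        \<le> (\<Sum>m=1..N. \<Sum>n=1..N. cmod (a m) * cmod (a n) * (real (gcd m n) powr (2*\<alpha>) / real (m*n) powr \<alpha>))"
      by (rule Re_quadratic_form_le_norms) simp
    also have "\<dots> \<le> (\<Sum>d=1..N. (multiple_sum \<alpha> N (\<lambda>m. cmod (a m)) d)\<^sup>2)"
      by (rule quadratic_form_le_sum_multiple_sum_squares) simp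
    also have "\<dots> \<le> C * real N powr (1 - 2*\<alpha>) * (\<Sum>m=1..N. (cmod (a m))\<^sup>2)"
      unfolding C_eq[symmetric] using assms Ct
      by (intro multiple_sum_square_le divisor_sum_square_le) auto
    finally show "Re (\<Sum>m=1..N. \<Sum>n=1..N.
            a m * cnj (a n) * complex_of_real (real (gcd m n) powr (2*\<alpha>) / real (m*n) powr \<alpha>))
        \<le> C * real N powr (1 - 2*\<alpha>)" using a by simp
  qed
qed

end
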